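(* For every $k\geq 2$, with $n=2^k$, every cancellation-free linear circuit that computes the $n\times n$ Sierpinski gasket matrix $S_k$ has size at least $\frac{1}{2}n\log_2 n$.
   Context: The Sierpinski gasket matrices are defined by $S_0=(1)$ and $S_{k+1}=\begin{pmatrix}S_k&0\\S_k&S_k\end{pmatrix}$ (a $2^k\times 2^k$ matrix over $\mathbb{F}_2$). A linear circuit over $\mathbb{F}_2$ with inputs $x_1,\ldots,x_n$ is a directed acyclic graph whose in-degree-0 nodes are the inputs and whose other nodes (gates) have in-degree 2 and compute the XOR of their two children; $n$ nodes are designated as outputs $y_1,\ldots,y_n$, and the circuit computes $A$ if $\mathbf{y}=A\mathbf{x}$ for all $\mathbf{x}\in\mathbb{F}_2^n$. The size is the number of gates. The value vector $\kappa(u)\in\mathbb{F}_2^n$ of a node $u$ has $\kappa(u)_i=1$ iff $x_i$ occurs in the parity computed at $u$. A linear circuit is cancellation-free if whenever there is a directed path from a node $w$ to a node $u$, $\kappa(u)\geq\kappa(w)$ coordinatewise. *)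

theory Defs
  imports Complex_Main
begin

text \<open>Sierpinski gasket matrix S_k as a Boolean (F_2) matrix, 0-indexed,
  entries outside the 2^k x 2^k range are False.\<close>
fun sierp :: "nat \<Rightarrow> nat \<Rightarrow> nat \<Rightarrow> bool" where
  "sierp 0 i j = (i = 0 \<and> j = 0)"
| "sierp (Suc k) i j =
     (let h = 2 ^ k in
      if i < h then j < h \<and> sierp k i j
      else if i < 2 * h then
        (if j < h then sierp k (i - h) j else j < 2 * h \<and> sierp k (i - h) (j - h))
      else False)"

text \<open>A linear circuit with n inputs: nodes 0..n-1 are the inputs x_0..x_{n-1};
  nodes n..n+gates-1 are gates. Gate g has two distinct children lft g, rgt g,
  both with smaller index (a topological numbering of the DAG, w.l.o.g.).\<close>
record circuit =
  gates :: nat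
  lft :: "nat \<Rightarrow> nat"
  rgt :: "nat \<Rightarrow> nat"
  outp :: "nat \<Rightarrow> nat"

definition wf_circuit :: "nat \<Rightarrow> circuit \<Rightarrow> bool" where
  "wf_circuit n C \<longleftrightarrow>
     (\<forall>g. n \<le> g \<and> g < n + gates C \<longrightarrow>
        lft C g < g \<and> rgt C g < g \<and> lft C g \<noteq> rgt C g) \<and>
     (\<forall>i < n. outp C i < n + gates C)"

text \<open>Value of node u on input assignment x (over F_2 = bool with xor).\<close>
fun cval :: "nat \<Rightarrow> circuit \<Rightarrow> (nat \<Rightarrow> bool) \<Rightarrow> nat \<Rightarrow> bool" where
  "cval n C x u =
     (if u < n then x u
      else if lft C u < u \<and> rgt C u < u
      then (cval n C x (lft C u) \<noteq> cval n C x (rgt C u))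
      else False)"

definition computes :: "nat \<Rightarrow> circuit \<Rightarrow> (nat \<Rightarrow> nat \<Rightarrow> bool) \<Rightarrow> bool" where
  "computes n C A \<longleftrightarrow>
     (\<forall>x. \<forall>i < n. cval n C x (outp C i) = odd (card {j. j < n \<and> A i j \<and> x j}))"

text \<open>Value vector kappa(u): the set of input indices occurring in the parity at u.\<close>
fun kappa :: "nat \<Rightarrow> circuit \<Rightarrow> nat \<Rightarrow> nat set" where
  "kappa n C u =
     (if u < n then {u}
      else if lft C u < u \<and> rgt C u < u
      then (kappa n C (lft C u) - kappa n C (rgt C u)) \<union> (kappa n C (rgt C u) - kappa n C (lft C u))
      else {})"

definition cedges :: "nat \<Rightarrow> circuit \<Rightarrow> (nat \<times> nat) set" where
  "cedges n C = {(c, g). n \<le> g \<and> g < n + gates C \<and> (c = lft C g \<or> c = rgt C g)}"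

definition cancellation_free :: "nat \<Rightarrow> circuit \<Rightarrow> bool" where
  "cancellation_free n C \<longleftrightarrow>
     (\<forall>w u. (w, u) \<in> (cedges n C)\<^sup>+ \<longrightarrow> kappa n C w \<subseteq> kappa n C u)"

end

theory Submission
  imports Defs
begin

text \<open>Gates are charged to dyadic blocks of inputs. Fix a block of size 2^(m+1) with halves
  L and R and some i < 2^m. The row of S_k through the i-th row of R meets L in the i-th row of
  S_m: it contains the i-th column x of L and nothing to the right of x in L. Descending from that
  output along children containing x, one reaches a gate where R enters only through the child
  not containing x. As S_m is lower triangular, x is the largest element of that gate's value
  vector inside L, so distinct i give distinct gates: 2^m gates per block. Recording also how
  the gate sees the coarser blocks around the block makes the charging injective, so there are
  at least (\<Sum>m<k. 2^(k-m-1) * 2^m) = k 2^(k-1) = (n/2) log n gates.\<close>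

lemma sierp_Suc:
  "sierp (Suc k) i j =
     (if i < 2^k then j < 2^k \<and> sierp k i j
      else if i < 2 * 2^k then
        (if j < 2^k then sierp k (i - 2^k) j else j < 2 * 2^k \<and> sierp k (i - 2^k) (j - 2^k))
      else False)"
  by (simp add: Let_def)

declare sierp.simps(2)[simp del]

lemma sierp_less: "sierp k i j \<Longrightarrow> i < 2^k \<and> j < 2^k"
proof (induction k arbitrary: i j)
  case (Suc k)
  show ?case
    using Suc.prems Suc.IH[of "i - 2^k" j] Suc.IH[of "i - 2^k" "j - 2^k"]
    by (auto simp: sierp_Suc split: if_splits)
qed simp

lemma sierp_le: "sierp k i j \<Longrightarrow> j \<le> i"
proof (induction k arbitrary: i j)
  case (Suc k)
  show ?case
    using Suc.prems Suc.IH[of "i - 2^k" j] Suc.IH[of "i - 2^k" "j - 2^k"] Suc.IH[of i j]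
    by (auto simp: sierp_Suc split: if_splits)
qed simp

lemma sierp_diag: "i < 2^k \<Longrightarrow> sierp k i i"
proof (induction k arbitrary: i)
  case (Suc k)
  show ?case using Suc.prems Suc.IH[of "i - 2^k"] Suc.IH[of i] by (auto simp: sierp_Suc)
qed simp

lemma add_mult_less_mult_iff: "(x::nat) < b \<Longrightarrow> q * b + x < c * b \<longleftrightarrow> q < c"
proof
  assume "x < b" "q < c"
  then have "q * b + x < Suc q * b" by simp
  also have "\<dots> \<le> c * b" using \<open>q < c\<close> by (intro mult_le_mono1) simp
  finally show "q * b + x < c * b" .
next
  assume "x < b" "q * b + x < c * b"
  then have "q * b < c * b" by linarith
  then show "q < c" by (simp add: mult_less_cancel2)
qed

lemma add_mult_div_eq: "(x::nat) < b \<Longrightarrow> (q * b + x) div b = q"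
  by simp

text \<open>S_(a+b) is the Kronecker product of S_a and S_b.\<close>
lemma sierp_add:
  assumes "x < 2^b" "y < 2^b"
  shows "sierp (a + b) (q * 2^b + x) (q' * 2^b + y) \<longleftrightarrow> sierp a q q' \<and> sierp b x y"
proof (induction a arbitrary: q q')
  case 0
  show ?case
  proof (cases "q = 0 \<and> q' = 0")
    case False
    then have "\<not> (q * 2^b + x < 1 * 2^b \<and> q' * 2^b + y < 1 * 2^b)"
      using add_mult_less_mult_iff[OF assms(1), of q 1] add_mult_less_mult_iff[OF assms(2), of q' 1]
      by auto
    then show ?thesis using False sierp_less[of b "q * 2^b + x" "q' * 2^b + y"] by auto
  qed simp
next
  case (Suc a)
  have power_split: "(2::nat)^(a + b) = 2^a * 2^b" "2 * (2^a * 2^b) = (2 * 2^a) * (2::nat)^b"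
    by (simp_all add: power_add)
  have shift: "q * 2^b + z - 2^a * 2^b = (q - 2^a) * 2^b + z" if "2^a \<le> q" for q z :: nat
    using that by (simp add: diff_mult_distrib)
  show ?case
    unfolding add_Suc sierp_Suc[of "a + b"] sierp_Suc[of a] power_split
    using add_mult_less_mult_iff[OF assms(1), of q] add_mult_less_mult_iff[OF assms(2), of q']
      shift[of q x] shift[of q' y]
      Suc.IH[of q q'] Suc.IH[of "q - 2^a" q'] Suc.IH[of "q - 2^a" "q' - 2^a"]
    by (auto simp: not_less)
qed

lemma sierp_lower_left_block:
  assumes "q < 2^a" "i < 2^m" "c < 2^m"
  shows "sierp (a + Suc m) (q * 2^Suc m + (2^m + i)) (q * 2^Suc m + c) \<longleftrightarrow> sierp m i c"
proof -
  have "sierp (Suc m) (2^m + i) c \<longleftrightarrow> sierp m i c" using assms(2,3) by (simp add: sierp_Suc)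
  then show ?thesis
    using sierp_add[of "2^m + i" "Suc m" c a q q] assms sierp_diag[OF assms(1)] by simp
qed

lemma odd_card_sym_diff:
  assumes "finite A" "finite B"
  shows "odd (card (sym_diff A B)) \<longleftrightarrow> odd (card A) \<noteq> odd (card B)"
proof -
  have "card (sym_diff A B) = card (A - B) + card (B - A)"
    using assms by (intro card_Un_disjoint) auto
  moreover have "card (A - B) = card A - card (A \<inter> B)" "card (B - A) = card B - card (A \<inter> B)"
    using assms by (simp_all add: card_Diff_subset_Int Int_commute)
  moreover have "card (A \<inter> B) \<le> card A" "card (A \<inter> B) \<le> card B"
    using assms by (simp_all add: card_mono)
  ultimately show ?thesis by presburger
qed

declare kappa.simps[simp del] cval.simps[simp del]

lemma kappa_subset: "kappa n C u \<subseteq> {..<n}"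
proof (induction u rule: less_induct)
  case (less u)
  then show ?case by (subst kappa.simps) auto
qed

lemma finite_kappa: "finite (kappa n C u)"
  by (rule finite_subset[OF kappa_subset]) simp

lemma cval_eq_odd_card_kappa: "cval n C x u \<longleftrightarrow> odd (card {j \<in> kappa n C u. x j})"
proof (induction u rule: less_induct)
  case (less u)
  consider (input) "u < n" | (gate) "\<not> u < n" "lft C u < u" "rgt C u < u"
    | (junk) "\<not> u < n" "\<not> (lft C u < u \<and> rgt C u < u)"
    by blast
  then show ?case
  proof cases
    case input
    have "kappa n C u = {u}" using input by (subst kappa.simps) simp
    moreover have "cval n C x u = x u" using input by (subst cval.simps) simp
    ultimately show ?thesis by (simp add: Collect_conv_if)
  next
    case gate
    let ?A = "{j \<in> kappa n C (lft C u). x j}" and ?B = "{j \<in> kappa n C (rgt C u). x j}"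
    have "{j \<in> kappa n C u. x j} = sym_diff ?A ?B"
      using gate by (subst kappa.simps) auto
    then have "odd (card {j \<in> kappa n C u. x j}) \<longleftrightarrow> odd (card ?A) \<noteq> odd (card ?B)"
      using odd_card_sym_diff[of ?A ?B] by (simp add: finite_kappa)
    moreover have "cval n C x u \<longleftrightarrow> cval n C x (lft C u) \<noteq> cval n C x (rgt C u)"
      using gate by (subst cval.simps) simp
    ultimately show ?thesis
      using gate less.IH by simp
  next
    case junk
    have "kappa n C u = {}" using junk by (subst kappa.simps) auto
    moreover have "\<not> cval n C x u" using junk by (subst cval.simps) auto
    ultimately show ?thesis by simp
  qed
qed

text \<open>Evaluating at the unit vectors reads off the rows of the computed matrix.\<close>
lemma kappa_outp:
  assumes "computes n C A" "i < n"
  shows "kappa n C (outp C i) = {j. j < n \<and> A i j}"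
proof (rule set_eqI)
  fix j
  have "cval n C (\<lambda>y. y = j) (outp C i) \<longleftrightarrow> odd (card {y. y < n \<and> A i y \<and> y = j})"
    using assms unfolding computes_def by simp
  moreover have "{y \<in> kappa n C (outp C i). y = j} = (if j \<in> kappa n C (outp C i) then {j} else {})"
    "{y. y < n \<and> A i y \<and> y = j} = (if j < n \<and> A i j then {j} else {})"
    by auto
  ultimately show "j \<in> kappa n C (outp C i) \<longleftrightarrow> j \<in> {j. j < n \<and> A i j}"
    unfolding cval_eq_odd_card_kappa by (auto split: if_splits)
qed

definition hits :: "nat set \<Rightarrow> nat \<Rightarrow> nat \<Rightarrow> bool" where
  "hits S l p \<longleftrightarrow> (\<exists>y\<in>S. y div 2^l = p)"

lemma div_power_ancestor:
  assumes "(z::nat) div 2^m div 2 = q" "Suc m \<le> l"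
  shows "z div 2^l = q div 2^(l - Suc m)"
proof -
  have "l = m + 1 + (l - Suc m)" using assms(2) by simp
  then have "z div 2^l = z div 2^m div 2^1 div 2^(l - Suc m)"
    by (metis div_exp_eq)
  then show ?thesis using assms(1) by simp
qed

lemma div_power_Suc_diff: "m \<le> l \<Longrightarrow> (q::nat) div 2^(Suc l - m) = q div 2^(l - m) div 2"
  using div_exp_eq[of q "l - m" 1] by (simp add: Suc_diff_le)

locale cancellation_free_circuit =
  fixes n :: nat and C :: circuit
  assumes wf: "wf_circuit n C" and cf: "cancellation_free n C"
begin

abbreviation \<kappa> :: "nat \<Rightarrow> nat set" where "\<kappa> \<equiv> kappa n C"

abbreviation gate_nodes :: "nat set" where "gate_nodes \<equiv> {n..<n + gates C}"

lemma children_less: "g \<in> gate_nodes \<Longrightarrow> lft C g < g \<and> rgt C g < g"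
  using wf unfolding wf_circuit_def by auto

lemma kappa_mono: "(w, u) \<in> (cedges n C)\<^sup>* \<Longrightarrow> \<kappa> w \<subseteq> \<kappa> u"
  using cf unfolding cancellation_free_def by (auto simp: rtrancl_eq_or_trancl)

lemma kappa_children_subset:
  assumes "g \<in> gate_nodes"
  shows "\<kappa> (lft C g) \<subseteq> \<kappa> g" "\<kappa> (rgt C g) \<subseteq> \<kappa> g"
  using assms kappa_mono[of "lft C g" g] kappa_mono[of "rgt C g" g] unfolding cedges_def by auto

text \<open>Both children's value vectors lie below that of g, so their symmetric difference is a
  disjoint union.\<close>
lemma kappa_gate:
  assumes "g \<in> gate_nodes"
  shows "\<kappa> g = \<kappa> (lft C g) \<union> \<kappa> (rgt C g)"
proof -
  have "\<kappa> g = sym_diff (\<kappa> (lft C g)) (\<kappa> (rgt C g))"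
    using assms children_less[OF assms] by (subst kappa.simps) auto
  then show ?thesis using kappa_children_subset[OF assms] by blast
qed

lemma hits_gate:
  "g \<in> gate_nodes \<Longrightarrow> hits (\<kappa> g) l p \<longleftrightarrow> hits (\<kappa> (lft C g)) l p \<or> hits (\<kappa> (rgt C g)) l p"
  unfolding hits_def kappa_gate by blast

text \<open>Follow, from u downwards, a child still containing x and meeting Y, until the
  part of Y enters through the other child only.\<close>
lemma separating_gate:
  assumes "u < n + gates C" "x \<in> \<kappa> u" "x \<notin> Y" "\<kappa> u \<inter> Y \<noteq> {}"
  shows "\<exists>t c d. t \<in> gate_nodes \<and> (t, u) \<in> (cedges n C)\<^sup>* \<and> {c, d} = {lft C t, rgt C t} \<and>
    x \<in> \<kappa> c \<and> \<kappa> c \<inter> Y = {} \<and> \<kappa> d \<inter> Y \<noteq> {}"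
  using assms
proof (induction u rule: less_induct)
  case (less u)
  have u: "u \<in> gate_nodes"
  proof (rule ccontr)
    assume "u \<notin> gate_nodes"
    then have "\<kappa> u = {u}" using less.prems(1) by (subst kappa.simps) simp
    then show False using less.prems(2-4) by auto
  qed
  have "x \<in> \<kappa> (lft C u) \<or> x \<in> \<kappa> (rgt C u)" using less.prems(2) kappa_gate[OF u] by auto
  then obtain c d where cd: "{c, d} = {lft C u, rgt C u}" "x \<in> \<kappa> c"
    by (metis insert_commute)
  then have cd_union: "\<kappa> u = \<kappa> c \<union> \<kappa> d" using kappa_gate[OF u] by (auto simp: doubleton_eq_iff)
  show ?case
  proof (cases "\<kappa> c \<inter> Y = {}")
    case True
    then have "\<kappa> d \<inter> Y \<noteq> {}" using cd_union less.prems(4) by auto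
    then show ?thesis using True cd u by blast
  next
    case False
    have c: "c < u" "(c, u) \<in> cedges n C"
      using cd(1) children_less[OF u] u unfolding cedges_def by (auto simp: doubleton_eq_iff)
    have "c < n + gates C" using c(1) less.prems(1) by simp
    from less.IH[OF c(1) this cd(2) less.prems(3) False]
    obtain t c' d' where "t \<in> gate_nodes" "(t, c) \<in> (cedges n C)\<^sup>*" "{c', d'} = {lft C t, rgt C t}"
      "x \<in> \<kappa> c'" "\<kappa> c' \<inter> Y = {}" "\<kappa> d' \<inter> Y \<noteq> {}"
      by blast
    then show ?thesis using c(2) by (meson rtrancl_into_rtrancl)
  qed
qed

text \<open>t is charged to the dyadic block q of size 2^(m+1) when exactly one child of t meets the
  right half of the block and, at every coarser level l, t sees the ancestor
  p = q div 2^(l-m-1) of the block as a row of S_k through the right half would: the right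
  sibling of a left ancestor (p even) is missed, a right ancestor (p odd) is met by both children.
  These extra clauses make the charging injective across levels.\<close>
definition charged :: "nat \<Rightarrow> nat \<Rightarrow> nat \<Rightarrow> nat \<Rightarrow> bool" where
  "charged k m q t \<longleftrightarrow> t \<in> gate_nodes \<and>
     hits (\<kappa> (lft C t)) m (2*q+1) \<noteq> hits (\<kappa> (rgt C t)) m (2*q+1) \<and>
     (\<forall>l. Suc m \<le> l \<and> l < k \<longrightarrow>
        (even (q div 2^(l - Suc m)) \<longrightarrow> \<not> hits (\<kappa> t) l (q div 2^(l - Suc m) + 1)) \<and>
        (odd (q div 2^(l - Suc m)) \<longrightarrow>
           hits (\<kappa> (lft C t)) l (q div 2^(l - Suc m)) \<and> hits (\<kappa> (rgt C t)) l (q div 2^(l - Suc m))))"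

lemma charged_gate_node: "charged k m q t \<Longrightarrow> t \<in> gate_nodes"
  unfolding charged_def by blast

lemma charged_intro:
  assumes t: "t \<in> gate_nodes" and cd: "{c, d} = {lft C t, rgt C t}"
    and x: "x \<in> \<kappa> c" "x div 2^m = 2*q"
    and sep: "\<not> hits (\<kappa> c) m (2*q+1)" "hits (\<kappa> d) m (2*q+1)"
    and r: "r div 2^m = 2*q+1" "\<forall>y\<in>\<kappa> t. y \<le> r"
  shows "charged k m q t"
  unfolding charged_def
proof (intro conjI allI impI)
  show "t \<in> gate_nodes" by (fact t)
  show "hits (\<kappa> (lft C t)) m (2*q+1) \<noteq> hits (\<kappa> (rgt C t)) m (2*q+1)"
    using cd sep by (auto simp: doubleton_eq_iff)
next
  fix l assume l: "Suc m \<le> l \<and> l < k"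
  let ?p = "q div 2^(l - Suc m)"
  have "r div 2^l = ?p" using div_power_ancestor[of r m q l] r(1) l by simp
  then show "\<not> hits (\<kappa> t) l (?p + 1)"
    using r(2) div_le_mono[of _ r "2^l"] unfolding hits_def by fastforce
next
  fix l assume l: "Suc m \<le> l \<and> l < k"
  let ?p = "q div 2^(l - Suc m)"
  have "x div 2^l = ?p" using div_power_ancestor[of x m q l] x(2) l by simp
  then have "hits (\<kappa> c) l ?p" using x(1) unfolding hits_def by blast
  moreover obtain y where "y \<in> \<kappa> d" "y div 2^m = 2*q+1" using sep(2) unfolding hits_def by blast
  then have "hits (\<kappa> d) l ?p" using div_power_ancestor[of y m q l] l unfolding hits_def by auto
  ultimately show "hits (\<kappa> (lft C t)) l ?p" "hits (\<kappa> (rgt C t)) l ?p"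
    using cd by (auto simp: doubleton_eq_iff)
qed

text \<open>Row r = q 2^(m+1) + 2^m + i of S_k meets the left half of the block q in row i of S_m,
  so it contains x = q 2^(m+1) + i and nothing to the right of x in that half.\<close>
lemma ex_charged_gate:
  assumes comp: "computes n C (sierp k)" and n: "n = 2^k" and m: "m < k"
    and q: "q < 2^(k - Suc m)" and i: "i < 2^m"
  shows "\<exists>t. charged k m q t \<and> q * 2^Suc m + i \<in> \<kappa> (lft C t) \<union> \<kappa> (rgt C t) \<and>
           (\<forall>y\<in>\<kappa> t. y div 2^m = 2*q \<longrightarrow> y \<le> q * 2^Suc m + i)"
proof -
  define x where "x = q * 2^Suc m + i"
  define r where "r = q * 2^Suc m + (2^m + i)"
  have k: "k = (k - Suc m) + Suc m" using m by simp
  have "x = 2*q * 2^m + i" "r = (2*q+1) * 2^m + i" by (simp_all add: x_def r_def)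
  then have x_div: "x div 2^m = 2*q" and r_div: "r div 2^m = 2*q+1"
    using add_mult_div_eq[OF i] by presburger+
  have "r < Suc q * 2^Suc m" using i by (simp add: r_def)
  also have "\<dots> \<le> n" using q k n by (metis Suc_leI mult_le_mono1 power_add)
  finally have "r < n" .
  then have row: "\<kappa> (outp C r) = {y. y < n \<and> sierp k r y}"
    using kappa_outp[OF comp] by simp
  have row_block: "sierp k r (q * 2^Suc m + c) \<longleftrightarrow> sierp m i c" if "c < 2^m" for c
    using sierp_lower_left_block[OF q i that] k unfolding r_def by metis
  have "sierp k r x" using row_block[OF i] sierp_diag[OF i] by (simp add: x_def)
  then have x_row: "x \<in> \<kappa> (outp C r)" using row sierp_less n by auto
  have "\<kappa> (outp C r) \<inter> {y. y div 2^m = 2*q+1} \<noteq> {}"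
    using row r_div \<open>r < n\<close> sierp_diag[of r k] n by auto
  moreover have "outp C r < n + gates C" using wf \<open>r < n\<close> unfolding wf_circuit_def by blast
  ultimately obtain t c d where t: "t \<in> gate_nodes" "(t, outp C r) \<in> (cedges n C)\<^sup>*"
      and cd: "{c, d} = {lft C t, rgt C t}" "x \<in> \<kappa> c"
      and sep: "\<kappa> c \<inter> {y. y div 2^m = 2*q+1} = {}" "\<kappa> d \<inter> {y. y div 2^m = 2*q+1} \<noteq> {}"
    using separating_gate[OF _ x_row, of "{y. y div 2^m = 2*q+1}"] x_div by auto
  have t_row: "sierp k r y" if "y \<in> \<kappa> t" for y
    using kappa_mono[OF t(2)] that row by auto
  have "charged k m q t"
  proof (rule charged_intro[OF t(1) cd x_div _ _ r_div])
    show "\<not> hits (\<kappa> c) m (2*q+1)" "hits (\<kappa> d) m (2*q+1)"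
      using sep unfolding hits_def by auto
    show "\<forall>y\<in>\<kappa> t. y \<le> r" using t_row sierp_le by blast
  qed
  moreover have "x \<in> \<kappa> (lft C t) \<union> \<kappa> (rgt C t)" using cd by (auto simp: doubleton_eq_iff)
  moreover have "y \<le> x" if "y \<in> \<kappa> t" "y div 2^m = 2*q" for y
  proof -
    have y: "y = q * 2^Suc m + y mod 2^m" using that(2) div_mult_mod_eq[of y "2^m"] by simp
    then have "sierp m i (y mod 2^m)" using row_block[of "y mod 2^m"] t_row[OF that(1)] by simp
    then show "y \<le> x" using sierp_le y unfolding x_def by fastforce
  qed
  ultimately show ?thesis unfolding x_def by blast
qed

lemma card_charged:
  assumes "computes n C (sierp k)" "n = 2^k" "m < k" "q < 2^(k - Suc m)"
  shows "2^m \<le> card {t. charged k m q t}"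
proof -
  obtain f where f: "\<And>i. i < 2^m \<Longrightarrow> charged k m q (f i) \<and>
      q * 2^Suc m + i \<in> \<kappa> (lft C (f i)) \<union> \<kappa> (rgt C (f i)) \<and>
      (\<forall>y\<in>\<kappa> (f i). y div 2^m = 2*q \<longrightarrow> y \<le> q * 2^Suc m + i)"
    using ex_charged_gate[OF assms] by metis
  \<comment> \<open>The column assigned to f i is the largest one of its value vector in the left half.\<close>
  have "inj_on f {..<2^m}"
  proof (rule linorder_inj_onI')
    fix i j :: nat assume ij: "i \<in> {..<2^m}" "j \<in> {..<2^m}" "i < j"
    have "f j \<in> gate_nodes" using f[of j] ij charged_gate_node by blast
    then have "q * 2^Suc m + j \<in> \<kappa> (f j)" using f[of j] ij kappa_gate by auto
    moreover have "(q * 2^Suc m + j) div 2^m = 2*q"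
      using add_mult_div_eq[of j "2^m" "2*q"] ij by (simp add: ac_simps)
    ultimately show "f i \<noteq> f j" using f[of i] ij by fastforce
  qed
  moreover have "f ` {..<2^m} \<subseteq> {t. charged k m q t}" using f by blast
  moreover have "finite {t. charged k m q t}"
    by (rule finite_subset[of _ gate_nodes]) (auto dest: charged_gate_node)
  ultimately show ?thesis using card_inj_on_le by fastforce
qed

lemma charged_ancestors_not_siblings:
  assumes "charged k m q t" "charged k m' q' t" "Suc m \<le> l" "Suc m' \<le> l" "l < k"
    and "even (q div 2^(l - Suc m))"
  shows "q' div 2^(l - Suc m') \<noteq> q div 2^(l - Suc m) + 1"
proof
  assume "q' div 2^(l - Suc m') = q div 2^(l - Suc m) + 1"
  then have "hits (\<kappa> (lft C t)) l (q div 2^(l - Suc m) + 1)"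
    using assms(2,4,5,6) unfolding charged_def by auto
  then have "hits (\<kappa> t) l (q div 2^(l - Suc m) + 1)"
    using hits_gate[OF charged_gate_node[OF assms(1)]] by blast
  moreover have "\<not> hits (\<kappa> t) l (q div 2^(l - Suc m) + 1)"
    using assms(1,3,5,6) unfolding charged_def by auto
  ultimately show False by blast
qed

text \<open>Downward induction from the top level k, where every block is the whole range.\<close>
lemma charged_same_ancestors:
  assumes c: "charged k m q t" "charged k m' q' t"
    and q: "q < 2^(k - Suc m)" "q' < 2^(k - Suc m')"
    and l: "Suc m \<le> l" "Suc m' \<le> l" "l \<le> k"
  shows "q div 2^(l - Suc m) = q' div 2^(l - Suc m')"
  using l(3)
proof (induction rule: inc_induct)
  case base
  show ?case using q by simp
next
  case (step j)
  have siblings: "a = b \<or> even a \<and> b = a + 1 \<or> even b \<and> a = b + 1" if "a div 2 = b div 2" for a b :: nat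
    using that by presburger
  have j: "Suc m \<le> j" "Suc m' \<le> j" using l step.hyps(1) by auto
  have "q div 2^(j - Suc m) div 2 = q' div 2^(j - Suc m') div 2"
    using step.IH div_power_Suc_diff[OF j(1), of q] div_power_Suc_diff[OF j(2), of q'] by simp
  then show ?case
    using siblings charged_ancestors_not_siblings[OF c(1,2) j step.hyps(2)]
      charged_ancestors_not_siblings[OF c(2,1) j(2,1) step.hyps(2)]
    by blast
qed

lemma charged_unique_le:
  assumes c: "charged k m q t" "charged k m' q' t" and le: "m \<le> m'" and m: "m' < k"
    and q: "q < 2^(k - Suc m)" "q' < 2^(k - Suc m')"
  shows "m = m' \<and> q = q'"
proof (cases "m = m'")
  case True
  then show ?thesis using charged_same_ancestors[OF c q, of "Suc m'"] m by simp
next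
  case False
  let ?p = "q div 2^(m' - Suc m)"
  have "?p div 2 = q'"
    using charged_same_ancestors[OF c q, of "Suc m'"] div_power_Suc_diff[of "Suc m" m' q] m le False
    by simp
  have l: "Suc m \<le> m'" using le False by simp
  have exactly_one: "hits (\<kappa> (lft C t)) m' (2*q'+1) \<noteq> hits (\<kappa> (rgt C t)) m' (2*q'+1)"
    using c(2) unfolding charged_def by blast
  show ?thesis
  proof (cases "even ?p")
    case True
    then have "?p + 1 = 2*q' + 1" using \<open>?p div 2 = q'\<close> by (metis dvd_mult_div_cancel)
    then have "\<not> hits (\<kappa> t) m' (2*q'+1)" using c(1) l m True unfolding charged_def by metis
    moreover have "hits (\<kappa> t) m' (2*q'+1)"
      using exactly_one hits_gate[OF charged_gate_node[OF c(1)]] by blast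
    ultimately show ?thesis by blast
  next
    case False
    then have "?p = 2*q' + 1" using \<open>?p div 2 = q'\<close> by (metis odd_two_times_div_two_succ)
    then show ?thesis using c(1) l m False exactly_one unfolding charged_def by metis
  qed
qed

lemma charged_unique:
  assumes "charged k m q t" "charged k m' q' t" "m < k" "m' < k"
    and "q < 2^(k - Suc m)" "q' < 2^(k - Suc m')"
  shows "m = m' \<and> q = q'"
  using charged_unique_le[OF assms(1,2) _ assms(4-6)] charged_unique_le[OF assms(2,1) _ assms(3,6,5)]
  by (metis nat_le_linear)

lemma gates_lower_bound:
  assumes "computes n C (sierp k)" "n = 2^k"
  shows "k * 2^(k-1) \<le> gates C"
proof -
  define I where "I = (SIGMA m:{..<k}. {..<(2::nat)^(k - Suc m)})"
  define T where "T = (\<lambda>(m, q). {t. charged k m q t})"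
  have "(\<Sum>(m, q)\<in>I. 2^m) = (\<Sum>m<k. 2^(k - Suc m) * 2^m :: nat)"
    unfolding I_def by (simp add: sum.Sigma[symmetric])
  also have "\<dots> = (\<Sum>m<k. 2^(k-1))" by (intro sum.cong refl) (simp flip: power_add)
  finally have "k * 2^(k-1) = (\<Sum>(m, q)\<in>I. 2^m)" by simp
  also have "\<dots> \<le> (\<Sum>p\<in>I. card (T p))"
    using card_charged[OF assms] unfolding I_def T_def by (intro sum_mono) auto
  also have "\<dots> = card (\<Union>p\<in>I. T p)"
  proof (rule card_UN_disjoint[symmetric])
    show "finite I" unfolding I_def by simp
    show "\<forall>p\<in>I. finite (T p)" unfolding T_def
      by (auto intro: finite_subset[of _ gate_nodes] dest: charged_gate_node)
    show "\<forall>p\<in>I. \<forall>p'\<in>I. p \<noteq> p' \<longrightarrow> T p \<inter> T p' = {}"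
      unfolding I_def T_def by (auto dest: charged_unique)
  qed
  also have "\<dots> \<le> card gate_nodes"
    unfolding T_def by (intro card_mono) (auto dest: charged_gate_node)
  finally show ?thesis by simp
qed

end

theorem theorem4:
  fixes k n :: nat and C :: circuit
  assumes "k \<ge> 2" and "n = 2 ^ k"
    and "wf_circuit n C"
    and "cancellation_free n C"
    and "computes n C (sierp k)"
  shows "real (gates C) \<ge> 1/2 * real n * log 2 (real n)"
proof -
  interpret cancellation_free_circuit n C using assms(3,4) by unfold_locales
  have log: "log 2 (real n) = real k" using assms(2) by simp
  have "real n = 2 * 2^(k-1)" using assms(1,2) by (simp flip: power_Suc)
  then have "1/2 * real n * log 2 (real n) = real (k * 2^(k-1))" unfolding log by simp
  also have "\<dots> \<le> real (gates C)"
    using gates_lower_bound[OF assms(5,2)] by linarith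
  finally show ?thesis .
qed

end
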